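(* For every integer $g\geq 3$ there exist a graph $G$ with girth $g$ and an $N\in\mathbb{N}$ such that $P_{DP}(G,m)<P(G,m)$ for every integer $m\geq N$.
   Context: All graphs are finite and simple. $P(G,m)$ denotes the chromatic polynomial of $G$. A cover of a graph $G$ is a pair $\mathcal{H}=(L,H)$ where $H$ is a graph and $L:V(G)\to\mathcal{P}(V(H))$ satisfies: (1) the sets $L(u)$, $u\in V(G)$, partition $V(H)$; (2) for every $u$, $H[L(u)]$ is complete; (3) if $E_H(L(u),L(v))\neq\emptyset$ then $u=v$ or $uv\in E(G)$; (4) if $uv\in E(G)$ then $E_H(L(u),L(v))$ is a matching (possibly empty). Here $E_H(S,U)$ is the set of edges of $H$ between $S$ and $U$. The cover is $m$-fold if $|L(u)|=m$ for all $u$. An $\mathcal{H}$-coloring is an independent set of $H$ of size $|V(G)|$. $P_{DP}(G,\mathcal{H})$ is the number of $\mathcal{H}$-colorings, and $P_{DP}(G,m)$ is the minimum of $P_{DP}(G,\mathcal{H})$ over all $m$-fold covers $\mathcal{H}$ of $G$. *)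

theory Defs
  imports Main "HOL-Library.FuncSet" "HOL-Library.Extended_Nat"
begin

definition simple_graph :: "'a set \<Rightarrow> 'a set set \<Rightarrow> bool" where
  "simple_graph V E \<longleftrightarrow> finite V \<and>
     (\<forall>e\<in>E. \<exists>u v. e = {u, v} \<and> u \<noteq> v \<and> u \<in> V \<and> v \<in> V)"

definition chrom_poly :: "'a set \<Rightarrow> 'a set set \<Rightarrow> nat \<Rightarrow> nat" where
  "chrom_poly V E m = card {f \<in> V \<rightarrow>\<^sub>E {..<m}. \<forall>u v. {u, v} \<in> E \<longrightarrow> f u \<noteq> f v}"

definition has_cycle_len :: "'a set \<Rightarrow> 'a set set \<Rightarrow> nat \<Rightarrow> bool" where
  "has_cycle_len V E k \<longleftrightarrow> k \<ge> 3 \<and> (\<exists>vs. length vs = k \<and> distinct vs \<and> set vs \<subseteq> V \<and>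
     (\<forall>i<k. {vs ! i, vs ! ((i + 1) mod k)} \<in> E))"

text \<open>Girth: length of a shortest cycle (infinity for forests).\<close>
definition girth :: "'a set \<Rightarrow> 'a set set \<Rightarrow> enat" where
  "girth V E = (INF k\<in>{k. has_cycle_len V E k}. enat k)"

definition is_cover :: "'a set \<Rightarrow> 'a set set \<Rightarrow> ('a \<Rightarrow> 'b set) \<Rightarrow> 'b set \<Rightarrow> 'b set set \<Rightarrow> bool" where
  "is_cover V E L VH EH \<longleftrightarrow>
     simple_graph VH EH \<and>
     (\<Union>u\<in>V. L u) = VH \<and>
     (\<forall>u\<in>V. \<forall>v\<in>V. u \<noteq> v \<longrightarrow> L u \<inter> L v = {}) \<and>
     (\<forall>u\<in>V. \<forall>x\<in>L u. \<forall>y\<in>L u. x \<noteq> y \<longrightarrow> {x, y} \<in> EH) \<and>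
     (\<forall>u\<in>V. \<forall>v\<in>V. \<forall>x\<in>L u. \<forall>y\<in>L v. {x, y} \<in> EH \<longrightarrow> u = v \<or> {u, v} \<in> E) \<and>
     (\<forall>u v. {u, v} \<in> E \<longrightarrow>
        (\<forall>x\<in>L u. \<forall>y\<in>L v. \<forall>y'\<in>L v. {x, y} \<in> EH \<and> {x, y'} \<in> EH \<longrightarrow> y = y') \<and>
        (\<forall>y\<in>L v. \<forall>x\<in>L u. \<forall>x'\<in>L u. {x, y} \<in> EH \<and> {x', y} \<in> EH \<longrightarrow> x = x'))"

definition is_mfold_cover :: "'a set \<Rightarrow> 'a set set \<Rightarrow> nat \<Rightarrow> ('a \<Rightarrow> 'b set) \<Rightarrow> 'b set \<Rightarrow> 'b set set \<Rightarrow> bool" where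
  "is_mfold_cover V E m L VH EH \<longleftrightarrow> is_cover V E L VH EH \<and> (\<forall>u\<in>V. card (L u) = m)"

text \<open>Number of H-colourings: independent sets of H of size |V(G)|.\<close>
definition dp_count :: "'a set \<Rightarrow> 'b set \<Rightarrow> 'b set set \<Rightarrow> nat" where
  "dp_count V VH EH = card {I. I \<subseteq> VH \<and> (\<forall>x\<in>I. \<forall>y\<in>I. {x, y} \<notin> EH) \<and> card I = card V}"

text \<open>DP colour function: minimum over all m-fold covers (cover vertices taken in nat;
every finite cover is isomorphic to one on nat).\<close>
definition dp_chrom :: "'a set \<Rightarrow> 'a set set \<Rightarrow> nat \<Rightarrow> nat" where
  "dp_chrom V E m = Inf {dp_count V VH EH | L VH (EH :: nat set set).
       is_mfold_cover V E m L VH EH}"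

end

(*
  The witness is the disjoint union of C_{2g} and C_g. Take the m-fold cover that matches equal
  colours along every edge except one edge of C_{2g}, where colour c is matched with c + 1 mod m.
  Its H-colourings are the colourings of C_g times the colourings of the path on 2g vertices whose
  end colours a, b satisfy a \<noteq> b + 1 mod m instead of a \<noteq> b. With a fixed, the excluded end
  colour is a - 1 instead of a, and on a path of odd length the ends (a, a) admit exactly one
  colouring fewer than the ends (a, a - 1). So each a costs the cover one colouring, and
  P_DP(G, m) \<le> P(G, m) - m P(C_g, m) < P(G, m) for m \<ge> 3.
*)

theory Submission
  imports Defs "HOL-Library.Nat_Bijection"
begin

section \<open>Colourings of paths and cycles\<close>

definition path_colourings :: "nat \<Rightarrow> nat \<Rightarrow> nat \<Rightarrow> nat \<Rightarrow> (nat \<Rightarrow> nat) set" where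
  "path_colourings m k a b =
     {f \<in> {..k} \<rightarrow>\<^sub>E {..<m}. f 0 = a \<and> f k = b \<and> (\<forall>i<k. f i \<noteq> f (Suc i))}"

text \<open>Colourings of the path \<open>0, \<dots>, k\<close> whose closing edge \<open>{k, 0}\<close> carries the constraint \<open>Q\<close>:
  \<open>Q = (\<noteq>)\<close> gives the proper colourings of the cycle \<open>C\<^sub>k\<^sub>+\<^sub>1\<close>.\<close>
definition cycle_colourings :: "nat \<Rightarrow> nat \<Rightarrow> (nat \<Rightarrow> nat \<Rightarrow> bool) \<Rightarrow> (nat \<Rightarrow> nat) set" where
  "cycle_colourings m k Q = {f \<in> {..k} \<rightarrow>\<^sub>E {..<m}. (\<forall>i<k. f i \<noteq> f (Suc i)) \<and> Q (f 0) (f k)}"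

lemma finite_path_colourings: "finite (path_colourings m k a b)"
  by (rule finite_subset[of _ "{..k} \<rightarrow>\<^sub>E {..<m}"]) (auto simp: path_colourings_def finite_PiE)

lemma path_colourings_0:
  "a < m \<Longrightarrow> path_colourings m 0 a b = (if a = b then {restrict (\<lambda>_. a) {..0}} else {})"
  by (auto simp: path_colourings_def PiE_iff extensional_def restrict_def fun_eq_iff)

lemma path_colourings_Suc:
  assumes "b < m"
  shows "path_colourings m (Suc k) a b =
    (\<Union>c\<in>{..<m} - {b}. (\<lambda>f. f(Suc k := b)) ` path_colourings m k a c)"
proof (intro equalityI subsetI)
  fix f assume f: "f \<in> path_colourings m (Suc k) a b"
  have "f(Suc k := undefined) \<in> path_colourings m k a (f k)"
    using f by (auto simp: path_colourings_def PiE_iff extensional_def)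
  moreover have "f k \<in> {..<m} - {b}" "f = (f(Suc k := undefined))(Suc k := b)"
    using f by (auto simp: path_colourings_def)
  ultimately show "f \<in> (\<Union>c\<in>{..<m} - {b}. (\<lambda>f. f(Suc k := b)) ` path_colourings m k a c)"
    by blast
next
  fix f assume "f \<in> (\<Union>c\<in>{..<m} - {b}. (\<lambda>f. f(Suc k := b)) ` path_colourings m k a c)"
  then obtain c h where c: "c < m" "c \<noteq> b" and h: "h \<in> path_colourings m k a c"
    and f: "f = h(Suc k := b)" by auto
  have "\<forall>i<Suc k. f i \<noteq> f (Suc i)"
    using h c by (auto simp: f path_colourings_def less_Suc_eq)
  then show "f \<in> path_colourings m (Suc k) a b"
    using h assms by (auto simp: f path_colourings_def PiE_iff extensional_def)
qed

lemma card_path_colourings_Suc: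
  assumes "b < m"
  shows "card (path_colourings m (Suc k) a b) + card (path_colourings m k a b)
       = (\<Sum>c<m. card (path_colourings m k a c))"
proof -
  let ?ext = "\<lambda>f. f(Suc k := b)"
  have inj: "inj_on ?ext (path_colourings m k a c)" for c
  proof (rule inj_onI)
    fix f1 f2 assume f: "f1 \<in> path_colourings m k a c" "f2 \<in> path_colourings m k a c"
      and eq: "?ext f1 = ?ext f2"
    show "f1 = f2"
    proof (rule PiE_ext)
      show "f1 \<in> {..k} \<rightarrow>\<^sub>E {..<m}" "f2 \<in> {..k} \<rightarrow>\<^sub>E {..<m}"
        using f by (auto simp: path_colourings_def)
    next
      fix i assume "i \<in> {..k}"
      then show "f1 i = f2 i" using fun_cong[OF eq, of i] by auto
    qed
  qed
  have "card (path_colourings m (Suc k) a b)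
      = (\<Sum>c\<in>{..<m} - {b}. card (?ext ` path_colourings m k a c))"
    unfolding path_colourings_Suc[OF assms]
  proof (rule card_UN_disjoint)
    have "?ext ` path_colourings m k a c \<subseteq> {h. h k = c}" for c
      by (auto simp: path_colourings_def)
    then show "\<forall>i\<in>{..<m} - {b}. \<forall>j\<in>{..<m} - {b}. i \<noteq> j \<longrightarrow>
        ?ext ` path_colourings m k a i \<inter> ?ext ` path_colourings m k a j = {}"
      by blast
  qed (simp_all add: finite_path_colourings)
  also have "\<dots> = (\<Sum>c\<in>{..<m} - {b}. card (path_colourings m k a c))"
    by (simp add: card_image[OF inj])
  finally show ?thesis
    using assms by (simp add: sum.remove[of "{..<m}" b])
qed

text \<open>Both counts satisfy \<open>N\<^sub>k\<^sub>+\<^sub>1 + N\<^sub>k = T\<^sub>k\<close>, where \<open>T\<^sub>k\<close> counts all colourings of the path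
  \<open>0, \<dots>, k\<close> starting with \<open>a\<close>.\<close>
lemma card_path_colourings_diff:
  assumes "a < m" "b < m" "a \<noteq> b"
  shows "int (card (path_colourings m k a a)) - int (card (path_colourings m k a b)) = (-1) ^ k"
proof (induction k)
  case 0
  then show ?case using assms by (simp add: path_colourings_0)
next
  case (Suc k)
  then show ?case
    using card_path_colourings_Suc[of a m k a] card_path_colourings_Suc[of b m k a] assms by simp
qed

lemma card_cycle_colourings:
  "card (cycle_colourings m k Q) = (\<Sum>a<m. \<Sum>b\<in>{b\<in>{..<m}. Q a b}. card (path_colourings m k a b))"
proof -
  have "cycle_colourings m k Q = (\<Union>a\<in>{..<m}. \<Union>b\<in>{b\<in>{..<m}. Q a b}. path_colourings m k a b)"
    by (auto simp: cycle_colourings_def path_colourings_def PiE_iff)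
  also have "card \<dots> = (\<Sum>a<m. card (\<Union>b\<in>{b\<in>{..<m}. Q a b}. path_colourings m k a b))"
    by (rule card_UN_disjoint)
      (auto simp: path_colourings_def intro: finite_path_colourings[unfolded path_colourings_def])
  also have "\<dots> = (\<Sum>a<m. \<Sum>b\<in>{b\<in>{..<m}. Q a b}. card (path_colourings m k a b))"
    by (intro sum.cong refl card_UN_disjoint)
      (auto simp: path_colourings_def intro: finite_path_colourings[unfolded path_colourings_def])
  finally show ?thesis .
qed

lemma card_cycle_colourings_twisted:
  assumes "odd k" "2 \<le> m"
  shows "card (cycle_colourings m k (\<noteq>)) = card (cycle_colourings m k (\<lambda>a b. a \<noteq> Suc b mod m)) + m"
proof -
  let ?N = "\<lambda>a b. card (path_colourings m k a b)"
  have "(\<Sum>b\<in>{b\<in>{..<m}. a \<noteq> b}. ?N a b) = (\<Sum>b\<in>{b\<in>{..<m}. a \<noteq> Suc b mod m}. ?N a b) + 1"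
    if a: "a < m" for a
  proof -
    define p where "p = (if a = 0 then m - 1 else a - 1)"
    have p: "p < m" "p \<noteq> a" using a assms(2) by (auto simp: p_def)
    have "{b\<in>{..<m}. a \<noteq> Suc b mod m} = {..<m} - {p}"
      using a by (auto simp: p_def mod_Suc)
    then have twisted: "(\<Sum>b<m. ?N a b) = ?N a p + (\<Sum>b\<in>{b\<in>{..<m}. a \<noteq> Suc b mod m}. ?N a b)"
      using p by (simp add: sum.remove)
    have "{b\<in>{..<m}. a \<noteq> b} = {..<m} - {a}" by auto
    then have untwisted: "(\<Sum>b<m. ?N a b) = ?N a a + (\<Sum>b\<in>{b\<in>{..<m}. a \<noteq> b}. ?N a b)"
      using a by (simp add: sum.remove)
    have "int (?N a a) - int (?N a p) = -1"
      using card_path_colourings_diff[of a m p k] a p assms(1) by simp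
    then show ?thesis using twisted untwisted by linarith
  qed
  then show ?thesis
    by (simp add: card_cycle_colourings sum.distrib del: add_Suc_right add_Suc)
qed

section \<open>Cycles in successor graphs\<close>

lemma funpow_chain: "(\<And>i. i < n \<Longrightarrow> x (Suc i) = s (x i)) \<Longrightarrow> x n = (s ^^ n) (x 0)"
  by (induction n) auto

lemma add_mod_neq_self:
  fixes a j n :: nat
  assumes "a < n" "0 < j" "j < n"
  shows "(a + j) mod n \<noteq> a"
proof (cases "a + j < n")
  case False
  then have "(a + j) mod n = a + j - n"
    using assms by (simp add: le_mod_geq)
  then show ?thesis using assms False by linarith
qed (use assms in simp)

text \<open>Consecutive edges of the cycle cannot meet head to head (injectivity) or tail to tail
  (distinctness), so the cycle runs either entirely along \<open>s\<close> or entirely against it.\<close>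
lemma successor_cycle_closes:
  fixes s :: "'a \<Rightarrow> 'a"
  assumes inj: "inj_on s (set vs)" and dist: "distinct vs" and k: "length vs = k" "3 \<le> k"
    and step: "\<And>i. i < k \<Longrightarrow> vs ! (Suc i mod k) = s (vs ! i) \<or> vs ! i = s (vs ! (Suc i mod k))"
  shows "(s ^^ k) (vs ! 0) = vs ! 0"
proof -
  define fw where "fw i \<longleftrightarrow> vs ! (Suc i mod k) = s (vs ! i)" for i
  define bw where "bw i \<longleftrightarrow> vs ! i = s (vs ! (Suc i mod k))" for i
  have skip: "vs ! i \<noteq> vs ! (Suc (Suc i) mod k)" if "Suc i < k" for i
  proof -
    have "Suc (Suc i) mod k \<noteq> i"
      using that k(2) by (cases "Suc (Suc i) < k") (auto simp: mod_if)
    then show ?thesis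
      using nth_eq_iff_index_eq[OF dist] k that by simp
  qed
  have fw_Suc: "fw (Suc i)" if i: "Suc i < k" and "fw i" for i
  proof (rule ccontr)
    assume "\<not> fw (Suc i)"
    then have "s (vs ! i) = s (vs ! (Suc (Suc i) mod k))"
      using step[OF i] \<open>fw i\<close> i by (simp add: fw_def)
    then show False
      using skip[OF i] inj k i by (simp add: inj_on_eq_iff)
  qed
  have bw_Suc: "bw (Suc i)" if i: "Suc i < k" and "bw i" for i
    using step[OF i] \<open>bw i\<close> skip[OF i] i by (auto simp: bw_def)
  have "(\<forall>i<k. fw i) \<or> (\<forall>i<k. bw i)"
  proof (cases "fw 0")
    case True
    then have "fw i" if "i < k" for i
      using that by (induction i) (auto intro: fw_Suc)
    then show ?thesis by blast
  next
    case False
    then have "bw 0"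
      using step[of 0] k(2) by (simp add: fw_def bw_def)
    then have "bw i" if "i < k" for i
      using that by (induction i) (auto intro: bw_Suc)
    then show ?thesis by blast
  qed
  then show ?thesis
  proof
    assume "\<forall>i<k. fw i"
    then have "vs ! (k mod k) = (s ^^ k) (vs ! (0 mod k))"
      by (intro funpow_chain[where x = "\<lambda>i. vs ! (i mod k)"]) (simp add: fw_def)
    then show ?thesis by simp
  next
    assume bw: "\<forall>i<k. bw i"
    have "vs ! ((k - k) mod k) = (s ^^ k) (vs ! ((k - 0) mod k))"
    proof (rule funpow_chain[where x = "\<lambda>i. vs ! ((k - i) mod k)"])
      fix i assume "i < k"
      then show "vs ! ((k - Suc i) mod k) = s (vs ! ((k - i) mod k))"
        using bw[rule_format, of "k - Suc i"] by (simp add: bw_def Suc_diff_Suc)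
    qed
    then show ?thesis by simp
  qed
qed

section \<open>H-colourings as independent transversals\<close>

definition indep_transversals :: "'a set \<Rightarrow> ('a \<Rightarrow> 'b set) \<Rightarrow> 'b set set \<Rightarrow> ('a \<Rightarrow> 'b) set" where
  "indep_transversals V L EH = {f \<in> Pi\<^sub>E V L. \<forall>u\<in>V. \<forall>v\<in>V. {f u, f v} \<notin> EH}"

lemma finite_indep_transversals:
  assumes "is_cover V E L VH EH" "finite V"
  shows "finite (indep_transversals V L EH)"
proof -
  have "finite VH" using assms(1) by (simp add: is_cover_def simple_graph_def)
  then have "finite (L u)" if "u \<in> V" for u
    using assms(1) that by (auto simp: is_cover_def intro: finite_subset)
  then have "finite (Pi\<^sub>E V L)" using assms(2) by (simp add: finite_PiE)
  then show ?thesis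
    unfolding indep_transversals_def by (rule finite_subset[rotated]) auto
qed

text \<open>An independent set of size \<open>|V|\<close> meets every fibre exactly once, since the fibres are
  cliques partitioning the cover.\<close>
lemma dp_count_le_card_indep_transversals:
  assumes cover: "is_cover V E L VH EH" and fin: "finite V"
  shows "dp_count V VH EH \<le> card (indep_transversals V L EH)"
proof -
  let ?Ind = "{I. I \<subseteq> VH \<and> (\<forall>x\<in>I. \<forall>y\<in>I. {x, y} \<notin> EH) \<and> card I = card V}"
  have "?Ind \<subseteq> (\<lambda>f. f ` V) ` indep_transversals V L EH"
  proof
    fix I assume "I \<in> ?Ind"
    then have I: "I \<subseteq> VH" and indep: "\<And>x y. x \<in> I \<Longrightarrow> y \<in> I \<Longrightarrow> {x, y} \<notin> EH"
      and card_I: "card I = card V" by auto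
    define p where "p x = (SOME u. u \<in> V \<and> x \<in> L u)" for x
    have p: "p x \<in> V \<and> x \<in> L (p x)" if "x \<in> I" for x
    proof -
      have "\<exists>u. u \<in> V \<and> x \<in> L u" using I that cover by (auto simp: is_cover_def)
      then show ?thesis unfolding p_def by (rule someI_ex)
    qed
    have clique: "{x, y} \<in> EH" if "u \<in> V" "x \<in> L u" "y \<in> L u" "x \<noteq> y" for u x y
      using cover that by (auto simp: is_cover_def)
    have inj: "inj_on p I"
    proof (rule inj_onI)
      fix x y assume "x \<in> I" "y \<in> I" "p x = p y"
      then show "x = y"
        using p[of x] p[of y] indep[of x y] clique[of "p x" x y] by auto
    qed
    have "p ` I \<subseteq> V" using p by auto
    then have "p ` I = V"
      using card_subset_eq[OF fin] card_image[OF inj] card_I by auto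
    define f where "f = restrict (the_inv_into I p) V"
    have f: "f u \<in> I \<and> p (f u) = u" if "u \<in> V" for u
      using that \<open>p ` I = V\<close> the_inv_into_into[OF inj] f_the_inv_into_f[OF inj]
      by (auto simp: f_def)
    have "f u \<in> L u" if "u \<in> V" for u
      using f[OF that] p[of "f u"] by simp
    then have "f \<in> indep_transversals V L EH"
      using f indep by (auto simp: indep_transversals_def f_def)
    moreover have "f ` V = I"
    proof
      show "f ` V \<subseteq> I" using f by auto
      show "I \<subseteq> f ` V"
      proof
        fix x assume "x \<in> I"
        then have "x = f (p x)" and "p x \<in> V"
          using p the_inv_into_f_f[OF inj] by (auto simp: f_def)
        then show "x \<in> f ` V" by blast
      qed
    qed
    ultimately show "I \<in> (\<lambda>f. f ` V) ` indep_transversals V L EH" by blast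
  qed
  then have "dp_count V VH EH \<le> card ((\<lambda>f. f ` V) ` indep_transversals V L EH)"
    unfolding dp_count_def
    by (intro card_mono finite_imageI finite_indep_transversals[OF cover fin])
  also have "\<dots> \<le> card (indep_transversals V L EH)"
    by (rule card_image_le[OF finite_indep_transversals[OF cover fin]])
  finally show ?thesis .
qed

lemma card_PiE_Un_restrict:
  assumes AB: "A \<inter> B = {}"
  shows "card {f \<in> (A \<union> B) \<rightarrow>\<^sub>E C. P (restrict f A) \<and> Q (restrict f B)}
       = card {h \<in> A \<rightarrow>\<^sub>E C. P h} * card {h \<in> B \<rightarrow>\<^sub>E C. Q h}"
proof -
  let ?L = "{f \<in> (A \<union> B) \<rightarrow>\<^sub>E C. P (restrict f A) \<and> Q (restrict f B)}"
  let ?R = "{h \<in> A \<rightarrow>\<^sub>E C. P h} \<times> {h \<in> B \<rightarrow>\<^sub>E C. Q h}"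
  let ?join = "\<lambda>(h, k). \<lambda>x. if x \<in> A then h x else k x"
  have "bij_betw (\<lambda>f. (restrict f A, restrict f B)) ?L ?R"
  proof (rule bij_betwI[where g = ?join])
    show "(\<lambda>f. (restrict f A, restrict f B)) \<in> ?L \<rightarrow> ?R"
      by (auto simp: PiE_iff)
    show "?join \<in> ?R \<rightarrow> ?L"
    proof
      fix p assume "p \<in> ?R"
      then obtain h k where p: "p = (h, k)" and h: "h \<in> A \<rightarrow>\<^sub>E C" "P h" and k: "k \<in> B \<rightarrow>\<^sub>E C" "Q k"
        by auto
      have "restrict (?join p) A = h" "restrict (?join p) B = k"
        using h(1) k(1) AB by (auto simp: p PiE_iff extensional_def fun_eq_iff)
      moreover have "?join p \<in> (A \<union> B) \<rightarrow>\<^sub>E C"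
        using h(1) k(1) by (auto simp: p PiE_iff extensional_def)
      ultimately show "?join p \<in> ?L" using h k by auto
    qed
    show "?join (restrict f A, restrict f B) = f" if "f \<in> ?L" for f
      using that by (auto simp: PiE_iff extensional_def fun_eq_iff)
    show "(restrict (?join p) A, restrict (?join p) B) = p" if "p \<in> ?R" for p
      using that AB by (auto simp: PiE_iff extensional_def fun_eq_iff)
  qed
  then show ?thesis
    by (simp add: bij_betw_same_card card_cartesian_product)
qed

section \<open>The graph \<open>C\<^sub>2\<^sub>g + C\<^sub>g\<close> and its twisted cover\<close>

text \<open>Vertices \<open>{..<2g}\<close> carry \<open>C\<^sub>2\<^sub>g\<close> and \<open>{2g..<3g}\<close> carry \<open>C\<^sub>g\<close>; \<open>cyc_next g\<close> is the successor
  on each of the two cycles.\<close>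
definition cyc_next :: "nat \<Rightarrow> nat \<Rightarrow> nat" where
  "cyc_next g i = (if i < 2*g then Suc i mod (2*g) else 2*g + (Suc i - 2*g) mod g)"

definition cyc_V :: "nat \<Rightarrow> nat set" where
  "cyc_V g = {..<3*g}"

definition cyc_E :: "nat \<Rightarrow> nat set set" where
  "cyc_E g = {{i, cyc_next g i} | i. i < 3*g}"

lemma cyc_next_less: "3 \<le> g \<Longrightarrow> i < 3*g \<Longrightarrow> cyc_next g i < 3*g"
  unfolding cyc_next_def by (auto simp: mod_if)

lemma cyc_next_neq: "3 \<le> g \<Longrightarrow> i < 3*g \<Longrightarrow> cyc_next g i \<noteq> i"
  unfolding cyc_next_def by (auto simp: mod_if split: if_splits)

lemma cyc_next_next_neq: "3 \<le> g \<Longrightarrow> i < 3*g \<Longrightarrow> cyc_next g (cyc_next g i) \<noteq> i"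
  unfolding cyc_next_def by (auto simp: mod_if split: if_splits)

lemma cyc_next_inj: "3 \<le> g \<Longrightarrow> i < 3*g \<Longrightarrow> j < 3*g \<Longrightarrow> cyc_next g i = cyc_next g j \<Longrightarrow> i = j"
  unfolding cyc_next_def by (auto simp: mod_if split: if_splits)

lemma inj_on_cyc_next: "3 \<le> g \<Longrightarrow> inj_on (cyc_next g) {..<3*g}"
  by (auto intro: inj_onI cyc_next_inj)

lemma funpow_cyc_next_low: "v < 2*g \<Longrightarrow> (cyc_next g ^^ j) v = (v + j) mod (2*g)"
  by (induction j) (auto simp: cyc_next_def mod_Suc_eq)

lemma funpow_cyc_next_high:
  "2*g \<le> v \<Longrightarrow> v < 3*g \<Longrightarrow> (cyc_next g ^^ j) v = 2*g + (v - 2*g + j) mod g"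
  by (induction j) (auto simp: cyc_next_def mod_Suc_eq)

lemma funpow_cyc_next_neq:
  assumes "v < 3*g" "0 < j" "j < g"
  shows "(cyc_next g ^^ j) v \<noteq> v"
proof (cases "v < 2*g")
  case True
  then show ?thesis
    using add_mod_neq_self[of v "2*g" j] assms by (simp add: funpow_cyc_next_low)
next
  case False
  define w where "w = v - 2*g"
  have "v = 2*g + w" "w < g"
    using False assms(1) by (auto simp: w_def)
  then show ?thesis
    using add_mod_neq_self[of w g j] assms by (simp add: funpow_cyc_next_high)
qed

lemma cyc_E_iff:
  assumes "3 \<le> g"
  shows "{u, v} \<in> cyc_E g \<longleftrightarrow> u < 3*g \<and> v < 3*g \<and> (v = cyc_next g u \<or> u = cyc_next g v)"
proof
  assume "{u, v} \<in> cyc_E g"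
  then obtain i where "i < 3*g" "{u, v} = {i, cyc_next g i}"
    by (auto simp: cyc_E_def)
  then show "u < 3*g \<and> v < 3*g \<and> (v = cyc_next g u \<or> u = cyc_next g v)"
    using cyc_next_less[OF assms] by (auto simp: doubleton_eq_iff)
next
  assume "u < 3*g \<and> v < 3*g \<and> (v = cyc_next g u \<or> u = cyc_next g v)"
  then show "{u, v} \<in> cyc_E g"
    unfolding cyc_E_def by (auto simp: insert_commute)
qed

lemma simple_graph_cyc:
  assumes "3 \<le> g"
  shows "simple_graph (cyc_V g) (cyc_E g)"
  unfolding simple_graph_def cyc_V_def cyc_E_def
  using cyc_next_neq[OF assms] cyc_next_less[OF assms] by fastforce

lemma has_cycle_len_cyc_ge:
  assumes g: "3 \<le> g" and "has_cycle_len (cyc_V g) (cyc_E g) k"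
  shows "g \<le> k"
proof (rule ccontr)
  obtain vs where k: "length vs = k" "3 \<le> k" and dist: "distinct vs" and sub: "set vs \<subseteq> {..<3*g}"
    and adj: "\<And>i. i < k \<Longrightarrow> {vs ! i, vs ! (Suc i mod k)} \<in> cyc_E g"
    using assms(2) by (auto simp: has_cycle_len_def cyc_V_def)
  have "(cyc_next g ^^ k) (vs ! 0) = vs ! 0"
  proof (rule successor_cycle_closes[OF _ dist k])
    show "inj_on (cyc_next g) (set vs)"
      using inj_on_cyc_next[OF g] sub by (rule inj_on_subset)
  qed (use adj cyc_E_iff[OF g] in blast)
  moreover assume "\<not> g \<le> k"
  ultimately show False
    using funpow_cyc_next_neq[of "vs ! 0" g k] sub k by (auto simp: subset_iff)
qed

lemma has_cycle_len_cyc: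
  assumes "3 \<le> g"
  shows "has_cycle_len (cyc_V g) (cyc_E g) g"
  unfolding has_cycle_len_def
proof (intro conjI exI[of _ "[2*g..<3*g]"] allI impI)
  fix i assume "i < g"
  moreover have "cyc_next g (2*g + i) = 2*g + Suc i mod g"
    by (simp add: cyc_next_def)
  ultimately show "{[2*g..<3*g] ! i, [2*g..<3*g] ! ((i + 1) mod g)} \<in> cyc_E g"
    using cyc_E_iff[OF assms] by simp
qed (use assms in \<open>auto simp: cyc_V_def\<close>)

lemma girth_cyc: "3 \<le> g \<Longrightarrow> girth (cyc_V g) (cyc_E g) = enat g"
  unfolding girth_def
  by (intro antisym INF_lower2[of g] INF_greatest)
    (auto simp: has_cycle_len_cyc has_cycle_len_cyc_ge)

text \<open>The twisted cover of \<open>cyc_V g\<close>: fibre vertex \<open>prod_encode (u, c)\<close> is colour \<open>c\<close> at \<open>u\<close>. Every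
  edge \<open>{i, cyc_next g i}\<close> matches colour \<open>c\<close> with \<open>c\<close>, except the edge from \<open>2g - 1\<close> back to \<open>0\<close>,
  which matches \<open>c\<close> with \<open>c + 1 mod m\<close>.\<close>
definition twist :: "nat \<Rightarrow> nat \<Rightarrow> nat \<Rightarrow> nat \<Rightarrow> nat" where
  "twist g m i c = (if i = 2*g - 1 then Suc c mod m else c)"

definition tw_L :: "nat \<Rightarrow> nat \<Rightarrow> nat set" where
  "tw_L m u = (\<lambda>c. prod_encode (u, c)) ` {..<m}"

definition tw_V :: "nat \<Rightarrow> nat \<Rightarrow> nat set" where
  "tw_V g m = (\<Union>u\<in>cyc_V g. tw_L m u)"

definition tw_E :: "nat \<Rightarrow> nat \<Rightarrow> nat set set" where
  "tw_E g m =
     {{prod_encode (u, c), prod_encode (u, c')} | u c c'. u < 3*g \<and> c < m \<and> c' < m \<and> c \<noteq> c'} \<union>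
     {{prod_encode (i, c), prod_encode (cyc_next g i, twist g m i c)} | i c. i < 3*g \<and> c < m}"

lemma twist_less: "0 < m \<Longrightarrow> c < m \<Longrightarrow> twist g m i c < m"
  by (simp add: twist_def)

lemma twist_inj: "c < m \<Longrightarrow> d < m \<Longrightarrow> twist g m i c = twist g m i d \<Longrightarrow> c = d"
  by (auto simp: twist_def mod_if split: if_splits)

lemma tw_V_iff: "prod_encode (u, c) \<in> tw_V g m \<longleftrightarrow> u < 3*g \<and> c < m"
  by (auto simp: tw_V_def tw_L_def cyc_V_def)

lemma tw_E_cases:
  assumes "e \<in> tw_E g m"
  obtains u c c' where "e = {prod_encode (u, c), prod_encode (u, c')}"
      "u < 3*g" "c < m" "c' < m" "c \<noteq> c'"
    | i c where "e = {prod_encode (i, c), prod_encode (cyc_next g i, twist g m i c)}"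
      "i < 3*g" "c < m"
  using assms by (auto simp: tw_E_def)

lemma tw_E_iff:
  assumes "u < 3*g" "v < 3*g" "c < m" "d < m"
  shows "{prod_encode (u, c), prod_encode (v, d)} \<in> tw_E g m \<longleftrightarrow>
    (u = v \<and> c \<noteq> d) \<or> (v = cyc_next g u \<and> d = twist g m u c) \<or>
    (u = cyc_next g v \<and> c = twist g m v d)" (is "?edge \<longleftrightarrow> ?rel")
proof
  assume ?edge
  then show ?rel
    by (cases rule: tw_E_cases) (auto simp: doubleton_eq_iff)
next
  assume ?rel
  then show ?edge
    using assms unfolding tw_E_def by (auto simp: insert_commute)
qed

lemma simple_graph_tw:
  assumes "3 \<le> g" "0 < m"
  shows "simple_graph (tw_V g m) (tw_E g m)"
  unfolding simple_graph_def
proof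
  show "finite (tw_V g m)" by (simp add: tw_V_def tw_L_def cyc_V_def)
  show "\<forall>e\<in>tw_E g m. \<exists>x y. e = {x, y} \<and> x \<noteq> y \<and> x \<in> tw_V g m \<and> y \<in> tw_V g m"
  proof
    fix e assume "e \<in> tw_E g m"
    then show "\<exists>x y. e = {x, y} \<and> x \<noteq> y \<and> x \<in> tw_V g m \<and> y \<in> tw_V g m"
    proof (cases rule: tw_E_cases)
      case (1 u c c')
      then show ?thesis
        by (intro exI[of _ "prod_encode (u, c)"] exI[of _ "prod_encode (u, c')"]) (simp add: tw_V_iff)
    next
      case (2 i c)
      moreover have "i \<noteq> cyc_next g i" using cyc_next_neq[OF assms(1) 2(2)] by simp
      ultimately show ?thesis
        using cyc_next_less[OF assms(1)] twist_less[OF assms(2)]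
        by (intro exI[of _ "prod_encode (i, c)"] exI[of _ "prod_encode (cyc_next g i, twist g m i c)"])
          (simp add: tw_V_iff)
    qed
  qed
qed

lemma tw_matching:
  assumes g: "3 \<le> g" and e: "{u, v} \<in> cyc_E g"
    and x: "x \<in> tw_L m u" and y: "y \<in> tw_L m v" "y' \<in> tw_L m v"
    and xy: "{x, y} \<in> tw_E g m" "{x, y'} \<in> tw_E g m"
  shows "y = y'"
proof -
  have uv: "u < 3*g" "v < 3*g" "v = cyc_next g u \<or> u = cyc_next g v"
    using e cyc_E_iff[OF g] by auto
  then have "u \<noteq> v" using cyc_next_neq[OF g] by metis
  obtain c d d' where c: "c < m" "x = prod_encode (u, c)" and d: "d < m" "y = prod_encode (v, d)"
    and d': "d' < m" "y' = prod_encode (v, d')"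
    using x y by (auto simp: tw_L_def)
  note adj = tw_E_iff[OF uv(1,2) c(1) d(1)] tw_E_iff[OF uv(1,2) c(1) d'(1)]
  from uv(3) show ?thesis
  proof
    assume "v = cyc_next g u"
    then show ?thesis using adj xy c d d' \<open>u \<noteq> v\<close> cyc_next_next_neq[OF g uv(1)] by auto
  next
    assume "u = cyc_next g v"
    then have "c = twist g m v d" "c = twist g m v d'"
      using adj xy c d d' \<open>u \<noteq> v\<close> cyc_next_next_neq[OF g uv(2)] by auto
    then show ?thesis using twist_inj d d' by metis
  qed
qed

lemma is_mfold_cover_tw:
  assumes g: "3 \<le> g" and m: "0 < m"
  shows "is_mfold_cover (cyc_V g) (cyc_E g) m (tw_L m) (tw_V g m) (tw_E g m)"
  unfolding is_mfold_cover_def is_cover_def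
proof (intro conjI ballI allI impI)
  fix u v x y assume "u \<in> cyc_V g" "v \<in> cyc_V g" "x \<in> tw_L m u" "y \<in> tw_L m v"
    and "{x, y} \<in> tw_E g m"
  then show "u = v \<or> {u, v} \<in> cyc_E g"
    using cyc_E_iff[OF g] by (auto simp: cyc_V_def tw_L_def tw_E_iff)
next
  fix u v x y y' assume "{u, v} \<in> cyc_E g" "x \<in> tw_L m u" "y \<in> tw_L m v" "y' \<in> tw_L m v"
    and "{x, y} \<in> tw_E g m \<and> {x, y'} \<in> tw_E g m"
  then show "y = y'" using tw_matching[OF g] by blast
next
  fix u v x y x' assume "{u, v} \<in> cyc_E g" "y \<in> tw_L m v" "x \<in> tw_L m u" "x' \<in> tw_L m u"
    and "{x, y} \<in> tw_E g m \<and> {x', y} \<in> tw_E g m"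
  then show "x = x'"
    using tw_matching[OF g, where u = v and v = u and x = y and y = x and y' = x']
    by (auto simp: insert_commute)
qed (use simple_graph_tw[OF g m] in
    \<open>auto simp: tw_V_def tw_L_def cyc_V_def tw_E_iff card_image inj_on_def\<close>)

definition constrained_colourings :: "nat \<Rightarrow> nat \<Rightarrow> (nat \<Rightarrow> nat \<Rightarrow> nat \<Rightarrow> bool) \<Rightarrow> (nat \<Rightarrow> nat) set" where
  "constrained_colourings g m R =
     {f \<in> cyc_V g \<rightarrow>\<^sub>E {..<m}. \<forall>i<3*g. R i (f i) (f (cyc_next g i))}"

definition short_cycle_colourings :: "nat \<Rightarrow> nat \<Rightarrow> (nat \<Rightarrow> nat) set" where
  "short_cycle_colourings g m =
     {h \<in> {2*g..<3*g} \<rightarrow>\<^sub>E {..<m}. \<forall>i\<in>{2*g..<3*g}. h i \<noteq> h (cyc_next g i)}"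

lemma chrom_poly_cyc:
  assumes "3 \<le> g"
  shows "chrom_poly (cyc_V g) (cyc_E g) m = card (constrained_colourings g m (\<lambda>_ a b. a \<noteq> b))"
proof -
  have "(\<forall>u v. {u, v} \<in> cyc_E g \<longrightarrow> f u \<noteq> f v) \<longleftrightarrow> (\<forall>i<3*g. f i \<noteq> f (cyc_next g i))"
    for f :: "nat \<Rightarrow> nat"
    using cyc_E_iff[OF assms] cyc_next_less[OF assms] by metis
  then show ?thesis
    by (simp add: chrom_poly_def constrained_colourings_def)
qed

lemma indep_transversals_tw_subset:
  assumes "3 \<le> g"
  shows "indep_transversals (cyc_V g) (tw_L m) (tw_E g m) \<subseteq>
    (\<lambda>c. restrict (\<lambda>u. prod_encode (u, c u)) (cyc_V g)) `
      constrained_colourings g m (\<lambda>i a b. b \<noteq> twist g m i a)"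
proof
  fix f assume f: "f \<in> indep_transversals (cyc_V g) (tw_L m) (tw_E g m)"
  define c where "c = restrict (\<lambda>u. snd (prod_decode (f u))) (cyc_V g)"
  have fc: "f u = prod_encode (u, c u) \<and> c u < m" if u: "u \<in> cyc_V g" for u
  proof -
    have "f u \<in> tw_L m u"
      using f u by (auto simp: indep_transversals_def)
    then obtain d where "d < m" "f u = prod_encode (u, d)"
      by (auto simp: tw_L_def)
    then show ?thesis using u by (simp add: c_def)
  qed
  have "c \<in> constrained_colourings g m (\<lambda>i a b. b \<noteq> twist g m i a)"
  proof -
    have "c (cyc_next g i) \<noteq> twist g m i (c i)" if i: "i < 3*g" for i
    proof
      have ni: "cyc_next g i < 3*g" using cyc_next_less[OF assms i] .
      assume "c (cyc_next g i) = twist g m i (c i)"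
      then have "{f i, f (cyc_next g i)} \<in> tw_E g m"
        using fc[of i] fc[of "cyc_next g i"] i ni tw_E_iff[OF i ni] by (simp add: cyc_V_def)
      then show False
        using f i ni by (auto simp: indep_transversals_def cyc_V_def)
    qed
    then show ?thesis
      using fc by (auto simp: constrained_colourings_def c_def)
  qed
  moreover have "f = restrict (\<lambda>u. prod_encode (u, c u)) (cyc_V g)"
    using f fc by (auto simp: indep_transversals_def PiE_iff extensional_def fun_eq_iff)
  ultimately show "f \<in> (\<lambda>c. restrict (\<lambda>u. prod_encode (u, c u)) (cyc_V g)) `
      constrained_colourings g m (\<lambda>i a b. b \<noteq> twist g m i a)"
    by blast
qed

lemma card_constrained_colourings:
  assumes g: "3 \<le> g"
    and R_other: "\<And>i a b. i \<noteq> 2*g - 1 \<Longrightarrow> R i a b \<longleftrightarrow> a \<noteq> b"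
    and R_last: "\<And>a b. R (2*g - 1) b a \<longleftrightarrow> Q a b"
  shows "card (constrained_colourings g m R)
       = card (cycle_colourings m (2*g - 1) Q) * card (short_cycle_colourings g m)"
proof -
  let ?A = "{..<2*g}" and ?B = "{2*g..<3*g}"
  let ?P = "\<lambda>h. (\<forall>i<2*g - 1. h i \<noteq> h (Suc i)) \<and> Q (h 0) (h (2*g - 1))"
  let ?Q = "\<lambda>h. \<forall>i\<in>?B. h i \<noteq> h (cyc_next g i)"
  have split: "(\<forall>i<3*g. R i (f i) (f (cyc_next g i))) \<longleftrightarrow> ?P (restrict f ?A) \<and> ?Q (restrict f ?B)"
    for f
  proof -
    have "i < 3*g \<longleftrightarrow> i < 2*g - 1 \<or> i = 2*g - 1 \<or> i \<in> ?B" for i using g by auto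
    then have "(\<forall>i<3*g. R i (f i) (f (cyc_next g i))) \<longleftrightarrow>
        (\<forall>i<2*g - 1. R i (f i) (f (cyc_next g i))) \<and>
        R (2*g - 1) (f (2*g - 1)) (f (cyc_next g (2*g - 1))) \<and>
        (\<forall>i\<in>?B. R i (f i) (f (cyc_next g i)))"
      by blast
    also have "\<dots> \<longleftrightarrow> (\<forall>i<2*g - 1. restrict f ?A i \<noteq> restrict f ?A (Suc i)) \<and>
        Q (restrict f ?A 0) (restrict f ?A (2*g - 1)) \<and> ?Q (restrict f ?B)"
    proof (intro conj_cong)
      have "cyc_next g i = Suc i" if "i < 2*g - 1" for i
        using that by (simp add: cyc_next_def)
      then show "(\<forall>i<2*g - 1. R i (f i) (f (cyc_next g i))) \<longleftrightarrow>
          (\<forall>i<2*g - 1. restrict f ?A i \<noteq> restrict f ?A (Suc i))"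
        using R_other by auto
      have "cyc_next g (2*g - 1) = 0"
        using g by (simp add: cyc_next_def)
      then show "R (2*g - 1) (f (2*g - 1)) (f (cyc_next g (2*g - 1))) \<longleftrightarrow>
          Q (restrict f ?A 0) (restrict f ?A (2*g - 1))"
        using R_last g by simp
      have "cyc_next g i \<in> ?B" if "i \<in> ?B" for i
        using that g by (auto simp: cyc_next_def)
      moreover have "i \<noteq> 2*g - 1" if "i \<in> ?B" for i
        using that g by auto
      ultimately show "(\<forall>i\<in>?B. R i (f i) (f (cyc_next g i))) \<longleftrightarrow> ?Q (restrict f ?B)"
        using R_other by auto
    qed
    finally show ?thesis by (simp only: conj_assoc)
  qed
  have "cyc_V g = ?A \<union> ?B" by (auto simp: cyc_V_def)
  then have "card (constrained_colourings g m R)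
      = card {f \<in> (?A \<union> ?B) \<rightarrow>\<^sub>E {..<m}. ?P (restrict f ?A) \<and> ?Q (restrict f ?B)}"
    by (simp only: constrained_colourings_def split)
  also have "\<dots> = card {h \<in> ?A \<rightarrow>\<^sub>E {..<m}. ?P h} * card {h \<in> ?B \<rightarrow>\<^sub>E {..<m}. ?Q h}"
    by (rule card_PiE_Un_restrict[of ?A ?B "{..<m}" ?P ?Q]) auto
  also have "\<dots> = card (cycle_colourings m (2*g - 1) Q) * card (short_cycle_colourings g m)"
  proof -
    have "?A = {..2*g - 1}" using g by auto
    then show ?thesis by (simp only: cycle_colourings_def short_cycle_colourings_def)
  qed
  finally show ?thesis .
qed

lemma short_cycle_colourings_nonempty:
  assumes g: "3 \<le> g" and m: "3 \<le> m"
  shows "short_cycle_colourings g m \<noteq> {}"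
proof -
  \<comment> \<open>alternate colours 0 and 1, and give the last vertex colour 2 in case \<open>g\<close> is odd\<close>
  define h where "h = restrict (\<lambda>i. if i = 3*g - 1 then 2 else (i - 2*g) mod 2) {2*g..<3*g}"
  have "h i \<noteq> h (cyc_next g i)" if i: "i \<in> {2*g..<3*g}" for i
  proof (cases "i = 3*g - 1")
    case True
    then have "cyc_next g i = 2*g" using g by (simp add: cyc_next_def)
    then show ?thesis using True i g by (simp add: h_def)
  next
    case False
    moreover have "Suc i - 2*g = Suc (i - 2*g)" "Suc i - 2*g < g" using i False by auto
    ultimately have "cyc_next g i = Suc i" using i by (simp add: cyc_next_def)
    moreover note \<open>Suc i - 2*g = Suc (i - 2*g)\<close>
    ultimately show ?thesis using i False by (auto simp: h_def mod_Suc)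
  qed
  moreover have "(i - 2*g) mod 2 < m" for i :: nat
    using m mod_less_divisor[of 2 "i - 2*g"] by linarith
  then have "h \<in> {2*g..<3*g} \<rightarrow>\<^sub>E {..<m}" using m by (simp add: h_def)
  ultimately show ?thesis by (auto simp: short_cycle_colourings_def)
qed

lemma card_short_cycle_colourings_pos:
  assumes "3 \<le> g" "3 \<le> m"
  shows "0 < card (short_cycle_colourings g m)"
proof -
  have "finite (short_cycle_colourings g m)"
    by (rule finite_subset[of _ "{2*g..<3*g} \<rightarrow>\<^sub>E {..<m}"])
      (auto simp: short_cycle_colourings_def finite_PiE)
  then show ?thesis using short_cycle_colourings_nonempty[OF assms] by (simp add: card_gt_0_iff)
qed

lemma card_constrained_colourings_twisted_less:
  assumes g: "3 \<le> g" and m: "3 \<le> m"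
  shows "card (constrained_colourings g m (\<lambda>i a b. b \<noteq> twist g m i a))
       < card (constrained_colourings g m (\<lambda>_ a b. a \<noteq> b))"
proof -
  let ?S = "card (short_cycle_colourings g m)"
  have "card (constrained_colourings g m (\<lambda>i a b. b \<noteq> twist g m i a))
      = card (cycle_colourings m (2*g - 1) (\<lambda>a b. a \<noteq> Suc b mod m)) * ?S"
    using g by (intro card_constrained_colourings) (auto simp: twist_def)
  moreover have "card (constrained_colourings g m (\<lambda>_ a b. a \<noteq> b))
      = card (cycle_colourings m (2*g - 1) (\<noteq>)) * ?S"
    using g by (intro card_constrained_colourings) auto
  moreover have "card (cycle_colourings m (2*g - 1) (\<noteq>))
      = card (cycle_colourings m (2*g - 1) (\<lambda>a b. a \<noteq> Suc b mod m)) + m"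
    using g m by (intro card_cycle_colourings_twisted) auto
  ultimately show ?thesis
    using card_short_cycle_colourings_pos[OF g m] m by simp
qed

lemma dp_count_tw_le:
  assumes g: "3 \<le> g" and m: "0 < m"
  shows "dp_count (cyc_V g) (tw_V g m) (tw_E g m)
       \<le> card (constrained_colourings g m (\<lambda>i a b. b \<noteq> twist g m i a))"
proof -
  have cover: "is_cover (cyc_V g) (cyc_E g) (tw_L m) (tw_V g m) (tw_E g m)"
    using is_mfold_cover_tw[OF g m] by (simp add: is_mfold_cover_def)
  have fin: "finite (constrained_colourings g m (\<lambda>i a b. b \<noteq> twist g m i a))"
    by (rule finite_subset[of _ "cyc_V g \<rightarrow>\<^sub>E {..<m}"])
      (auto simp: constrained_colourings_def cyc_V_def finite_PiE)
  have "dp_count (cyc_V g) (tw_V g m) (tw_E g m)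
      \<le> card (indep_transversals (cyc_V g) (tw_L m) (tw_E g m))"
    using dp_count_le_card_indep_transversals[OF cover] by (simp add: cyc_V_def)
  also have "\<dots> \<le> card ((\<lambda>c. restrict (\<lambda>u. prod_encode (u, c u)) (cyc_V g)) `
      constrained_colourings g m (\<lambda>i a b. b \<noteq> twist g m i a))"
    by (intro card_mono finite_imageI fin indep_transversals_tw_subset g)
  also have "\<dots> \<le> card (constrained_colourings g m (\<lambda>i a b. b \<noteq> twist g m i a))"
    by (rule card_image_le[OF fin])
  finally show ?thesis .
qed

theorem mainTheorem2:
  fixes g :: nat
  assumes "g \<ge> 3"
  shows "\<exists>(V :: nat set) (E :: nat set set) (N :: nat).
           simple_graph V E \<and> girth V E = enat g \<and>
           (\<forall>m\<ge>N. dp_chrom V E m < chrom_poly V E m)"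
proof (intro exI conjI allI impI)
  show "simple_graph (cyc_V g) (cyc_E g)" using simple_graph_cyc[OF assms] .
  show "girth (cyc_V g) (cyc_E g) = enat g" using girth_cyc[OF assms] .
  fix m :: nat assume m: "3 \<le> m"
  have "dp_chrom (cyc_V g) (cyc_E g) m \<le> dp_count (cyc_V g) (tw_V g m) (tw_E g m)"
    unfolding dp_chrom_def using is_mfold_cover_tw[OF assms, of m] m by (intro cInf_lower) auto
  also have "\<dots> \<le> card (constrained_colourings g m (\<lambda>i a b. b \<noteq> twist g m i a))"
    using dp_count_tw_le[OF assms, of m] m by simp
  also have "\<dots> < card (constrained_colourings g m (\<lambda>_ a b. a \<noteq> b))"
    using card_constrained_colourings_twisted_less[OF assms m] .
  also have "\<dots> = chrom_poly (cyc_V g) (cyc_E g) m"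
    using chrom_poly_cyc[OF assms] by simp
  finally show "dp_chrom (cyc_V g) (cyc_E g) m < chrom_poly (cyc_V g) (cyc_E g) m" .
qed

end
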